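(* Let $W$ be $\{0,1\}$-valued, let $x\in\mathbb X$ and $B\Subset\mathbb X$. Then \[ (\mathfrak h/B)(x)=\begin{cases}\{e\setminus B\mid e\in\mathfrak h(x)\}&\text{if }x\notin B,\\ \{\{x\}\}&\text{if }x\in B.\end{cases} \] In particular, $\{x\}\notin(\mathfrak h/B)(x)$ implies both $\deg_{\mathfrak h/B}(x)\le\deg_{\mathfrak h}(x)$ and $\{x\}\notin\mathfrak h$.
   Context: $\mathbb X$ is a finite or countably infinite set; $e\Subset\mathbb X$ means finite subset. $W:\{X\Subset\mathbb X\}\to\{0,1\}$ is a pure hard-core interaction, and $\mathfrak h=\{e\Subset\mathbb X\mid W(e)=0\}$. The conditional interaction is $W(X\mid B)=\prod_{C\subset B}W(X\cup C)$ if $X\cap B=\varnothing$, $W(X\mid B)=0$ if $X=\{y\}$ with $y\in B$, and $W(X\mid B)=1$ otherwise; it is again $\{0,1\}$-valued, and $\mathfrak h/B=\{e\Subset\mathbb X\mid W(e\mid B)=0\}$. For a set $\mathfrak g$ of finite subsets, $\mathfrak g(x)=\{e\in\mathfrak g\mid x\in e\}$ and $\deg_{\mathfrak g}(x)=|\mathfrak g(x)|\in\{0,1,2,\dots\}\cup\{\infty\}$. *)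

theory Defs
  imports Main "HOL-Library.Countable_Set" "HOL-Library.Extended_Nat"
begin

(* Ground set \<X> is a countable (finite or countably infinite) set X :: 'a set;
   an interaction W assigns a value to each finite subset of X (values on
   other sets are irrelevant). *)

definition hc :: "'a set \<Rightarrow> ('a set \<Rightarrow> nat) \<Rightarrow> 'a set set" where
  "hc X W = {e. finite e \<and> e \<subseteq> X \<and> W e = 0}"

definition cond_int :: "('a set \<Rightarrow> nat) \<Rightarrow> 'a set \<Rightarrow> 'a set \<Rightarrow> nat" where
  "cond_int W B e =
     (if e \<inter> B = {} then (\<Prod>C\<in>Pow B. W (e \<union> C))
      else if (\<exists>y\<in>B. e = {y}) then 0 else 1)"

definition hc_cond :: "'a set \<Rightarrow> ('a set \<Rightarrow> nat) \<Rightarrow> 'a set \<Rightarrow> 'a set set" where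
  "hc_cond X W B = {e. finite e \<and> e \<subseteq> X \<and> cond_int W B e = 0}"

definition star :: "'a set set \<Rightarrow> 'a \<Rightarrow> 'a set set" where
  "star g x = {e \<in> g. x \<in> e}"

definition deg :: "'a set set \<Rightarrow> 'a \<Rightarrow> enat" where
  "deg g x = (if finite (star g x) then enat (card (star g x)) else \<infinity>)"

end

theory Submission
  imports Defs
begin

(* A set e \<ni> x with x \<notin> B lies in \<h>/B exactly when it avoids B and some e \<union> C with C \<subseteq> B
   lies in \<h>, i.e. when e is the trace f - B of an edge f \<in> \<h>(x); for x \<in> B only the
   singleton {x} survives. The degree bound follows since taking traces is a surjection
   from \<h>(x) onto (\<h>/B)(x), and {x} \<in> \<h> would have the trace {x}. *)

lemma cond_int_eq_0_iff:
  assumes "finite B"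
  shows "cond_int W B e = 0 \<longleftrightarrow>
           (e \<inter> B = {} \<and> (\<exists>C\<subseteq>B. W (e \<union> C) = 0)) \<or> (e \<inter> B \<noteq> {} \<and> (\<exists>y\<in>B. e = {y}))"
  using assms by (auto simp: cond_int_def)

lemma star_hc_cond_of_mem:
  assumes "x \<in> B" and "B \<subseteq> X"
  shows "star (hc_cond X W B) x = {{x}}"
  using assms by (auto simp: star_def hc_cond_def cond_int_def)

lemma star_hc_cond_of_not_mem:
  assumes "x \<notin> B" and "finite B" and "B \<subseteq> X"
  shows "star (hc_cond X W B) x = (\<lambda>e. e - B) ` star (hc X W) x"
proof (rule set_eqI, rule iffI)
  fix e assume "e \<in> star (hc_cond X W B) x"
  hence e: "x \<in> e" "finite e" "e \<subseteq> X" "cond_int W B e = 0"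
    by (auto simp: star_def hc_cond_def)
  with assms have "e \<inter> B = {}" and "\<exists>C\<subseteq>B. W (e \<union> C) = 0"
    by (auto simp: cond_int_eq_0_iff)
  then obtain C where C: "C \<subseteq> B" "W (e \<union> C) = 0" and disj: "e \<inter> B = {}"
    by blast
  have "e \<union> C \<in> star (hc X W) x"
    using C e assms finite_subset[OF C(1)] by (auto simp: star_def hc_def)
  moreover have "e = (e \<union> C) - B" using disj C(1) by auto
  ultimately show "e \<in> (\<lambda>e. e - B) ` star (hc X W) x" by blast
next
  fix e assume "e \<in> (\<lambda>e. e - B) ` star (hc X W) x"
  then obtain f where f: "x \<in> f" "finite f" "f \<subseteq> X" "W f = 0" and e: "e = f - B"
    by (auto simp: star_def hc_def)
  have "W (e \<union> (f \<inter> B)) = 0" using f(4) e by (simp add: Un_Diff_Int)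
  hence "cond_int W B e = 0" using assms(2) e by (auto simp: cond_int_eq_0_iff)
  thus "e \<in> star (hc_cond X W B) x" using f e assms(1) by (auto simp: star_def hc_cond_def)
qed

lemma deg_le_of_star_eq_image:
  assumes "star g' x = f ` star g x"
  shows "deg g' x \<le> deg g x"
  using assms by (cases "finite (star g x)") (auto simp: deg_def card_image_le)

theorem lemma5p3:
  fixes X :: "'a set" and W :: "'a set \<Rightarrow> nat" and x :: 'a and B :: "'a set"
  assumes "countable X"
    and "\<And>e. finite e \<Longrightarrow> e \<subseteq> X \<Longrightarrow> W e \<in> {0, 1}"
    and "x \<in> X"
    and "finite B" and "B \<subseteq> X"
  shows "star (hc_cond X W B) x =
           (if x \<notin> B then (\<lambda>e. e - B) ` star (hc X W) x else {{x}})
       \<and> ({x} \<notin> star (hc_cond X W B) x \<longrightarrow>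
            deg (hc_cond X W B) x \<le> deg (hc X W) x \<and> {x} \<notin> hc X W)"
proof (cases "x \<in> B")
  case True
  then show ?thesis using star_hc_cond_of_mem[OF True assms(5)] by simp
next
  case False
  note traces = star_hc_cond_of_not_mem[OF False assms(4,5), of W]
  have "{x} \<notin> hc X W" if "{x} \<notin> star (hc_cond X W B) x"
  proof
    assume "{x} \<in> hc X W"
    hence "{x} - B \<in> star (hc_cond X W B) x" unfolding traces by (simp add: star_def)
    with that False show False by (simp add: insert_Diff_if)
  qed
  with False traces deg_le_of_star_eq_image[OF traces] show ?thesis by simp
qed

end
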